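(* Consider the general LPP model described in the context, fix $\eta_0\in(0,\infty)$, $u\in\mathbb{R}$, set $\eta=\eta_0+ut^{-2/3}$, and suppose Assumptions A1 and A2 hold. Let $D$ be a probability distribution. If, as $t\to\infty$, $$\frac{L_{\mathcal{L}^-\to(\eta t,t)}-\mu t}{t^{1/3}}-\frac{L_{\mathcal{L}^+\to E^+}+L_{E^+\to(\eta t,t)}-\mu t}{t^{1/3}}\Rightarrow D,$$ then $$\frac{L_{\mathcal{L}^-\to(\eta t,t)}-\mu t}{t^{1/3}}-\frac{L_{\mathcal{L}^+\to(\eta t,t)}-\mu t}{t^{1/3}}\Rightarrow D.$$
   Context: LPP: for independent nonnegative $\{\omega_{i,j}\}$, an up-right path is a sequence of points of $\mathbb{Z}^2$ with increments in $\{(1,0),(0,1)\}$; $L_{S_A\to S_E}=\max_\pi\sum_{(i,j)\in\pi\setminus S_A}\omega_{i,j}$ over up-right paths from $S_A$ to $S_E$ ($-\infty$ if none); for points $A,B$ write $L_{A\to B}$; non-integer coordinates are understood as integer parts. General model: integers $x_k(0)$, $k\in\mathbb{Z}$, with $x_{k+1}(0)<x_k(0)$, $x_0(0)=1$, $x_1(0)<-1$; $\omega_{i,j}$ independent exponential with rate $v_j>0$; $\mathcal{L}^+=\{(k+x_k(0),k):k>0\}$, $\mathcal{L}^-=\{(k+x_k(0),k):k\le0\}$. Assumption A1: there exist $\mu\in\mathbb{R}$ and continuous distribution functions $G_1(\cdot;u),G_2(\cdot;u)$ with $\lim_{t\to\infty}\mathbb{P}((L_{\mathcal{L}^+\to(\eta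 t,t)}-\mu t)/t^{1/3}\le s)=G_1(s;u)$ and $\lim_{t\to\infty}\mathbb{P}((L_{\mathcal{L}^-\to(\eta t,t)}-\mu t)/t^{1/3}\le s)=G_2(s;u)$ for all $s$. Assumption A2: there exist $\kappa,\mu_0\in\mathbb{R}$, $\nu\in(1/3,1)$ and a continuous distribution function $G_0(\cdot;u)$ such that, with $E^+=(\eta t-\kappa t^\nu,t-t^\nu)$, for all $s$: $\lim_{t\to\infty}\mathbb{P}((L_{E^+\to(\eta t,t)}-\mu_0t^\nu)/t^{\nu/3}\le s)=G_0(s;u)$ and $\lim_{t\to\infty}\mathbb{P}((L_{\mathcal{L}^+\to E^+}-\mu t+\mu_0t^\nu)/t^{1/3}\le s)=G_1(s;u)$. "$\Rightarrow$" denotes convergence in distribution. *)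

theory Defs
  imports "HOL-Probability.Probability"
begin

definition up_right_path :: "(int \<times> int) list \<Rightarrow> bool" where
  "up_right_path p \<longleftrightarrow> p \<noteq> [] \<and>
     (\<forall>i. Suc i < length p \<longrightarrow>
        p ! Suc i = (fst (p ! i) + 1, snd (p ! i)) \<or>
        p ! Suc i = (fst (p ! i), snd (p ! i) + 1))"

text \<open>Last passage time from the set SA to the set SE:
  maximum over up-right paths from SA to SE of the sum of weights over the
  points of the path not lying in SA; equal to -infinity if no such path exists
  (supremum of the empty set in ereal).\<close>
definition LPP :: "(int \<times> int \<Rightarrow> real) \<Rightarrow> (int \<times> int) set \<Rightarrow> (int \<times> int) set \<Rightarrow> ereal" where
  "LPP w SA SE = (SUP p \<in> {p. up_right_path p \<and> hd p \<in> SA \<and> last p \<in> SE}.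
        ereal (\<Sum>q \<in> set p - SA. w q))"

definition Lplus :: "(int \<Rightarrow> int) \<Rightarrow> (int \<times> int) set" where
  "Lplus x = {(k + x k, k) | k. k > 0}"

definition Lminus :: "(int \<Rightarrow> int) \<Rightarrow> (int \<times> int) set" where
  "Lminus x = {(k + x k, k) | k. k \<le> 0}"

definition ipt :: "real \<Rightarrow> real \<Rightarrow> int \<times> int" where
  "ipt a b = (\<lfloor>a\<rfloor>, \<lfloor>b\<rfloor>)"

definition cont_distr_fun :: "(real \<Rightarrow> real) \<Rightarrow> bool" where
  "cont_distr_fun G \<longleftrightarrow> continuous_on UNIV G \<and> mono G \<and>
     (G \<longlongrightarrow> 0) at_bot \<and> (G \<longlongrightarrow> 1) at_top"

definition conv_distr :: "'a measure \<Rightarrow> (real \<Rightarrow> 'a \<Rightarrow> ereal) \<Rightarrow> real measure \<Rightarrow> bool" where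
  "conv_distr M X D \<longleftrightarrow>
     (\<forall>s. isCont (cdf D) s \<longrightarrow>
        ((\<lambda>t. measure M {\<omega> \<in> space M. X t \<omega> \<le> ereal s}) \<longlongrightarrow> cdf D s) at_top)"

end

theory Submission
  imports Defs
begin

text \<open>
  Passage times are superadditive: L(L+ \<rightarrow> P) \<ge> L(L+ \<rightarrow> E+) + L(E+ \<rightarrow> P) as soon as E+ lies
  strictly to the right of the line L+. After normalisation by t^(1/3) the right-hand side is
  Y1 + t^((\<nu>-1)/3) Y2 with Y1 \<Rightarrow> G1 and Y2 \<Rightarrow> G0, so by Slutsky's lemma it converges to G1,
  the limit law of the left-hand side. A variable dominating another one with the same continuous
  limit law differs from it by a quantity vanishing in probability, and a second application of
  Slutsky's lemma moves the convergence to D from one difference to the other. Infinite passage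
  times only occur on events of vanishing probability.
\<close>

section \<open>Up-right paths and superadditivity\<close>

lemma up_right_path_Cons_Cons:
  "up_right_path (a # b # q) \<longleftrightarrow>
     (b = (fst a + 1, snd a) \<or> b = (fst a, snd a + 1)) \<and> up_right_path (b # q)"
  unfolding up_right_path_def
  by (auto simp: All_less_Suc2 nth_Cons')

lemma up_right_path_append:
  assumes "up_right_path p" "last p = e" "up_right_path (e # q)"
  shows "up_right_path (p @ q)"
  using assms
proof (induction p rule: induct_list012)
  case 1
  then show ?case by (simp add: up_right_path_def)
next
  case (2 a)
  then show ?case by simp
next
  case (3 a b p)
  then show ?case by (simp add: up_right_path_Cons_Cons)
qed

lemma up_right_path_nth:
  assumes p: "up_right_path p" and i: "i < length p"
  shows "fst (hd p) \<le> fst (p ! i) \<and> snd (hd p) \<le> snd (p ! i) \<and>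
         fst (p ! i) + snd (p ! i) = fst (hd p) + snd (hd p) + int i"
  using i
proof (induction i)
  case 0
  then show ?case by (simp add: hd_conv_nth)
next
  case (Suc i)
  have "p ! Suc i = (fst (p ! i) + 1, snd (p ! i)) \<or> p ! Suc i = (fst (p ! i), snd (p ! i) + 1)"
    using p Suc.prems unfolding up_right_path_def by blast
  then show ?case using Suc by auto
qed

lemma up_right_path_antidiagonal_le_last:
  assumes p: "up_right_path p" and z: "z \<in> set p"
  shows "fst z + snd z \<le> fst (last p) + snd (last p)"
proof -
  obtain i where i: "i < length p" "z = p ! i" using z by (auto simp: in_set_conv_nth)
  have "p \<noteq> []" using p by (simp add: up_right_path_def)
  then show ?thesis
    using up_right_path_nth[OF p i(1)] up_right_path_nth[OF p, of "length p - 1"] i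
    by (simp add: last_conv_nth)
qed

lemma up_right_path_Cons_tail:
  assumes q: "up_right_path (e # q)" and z: "z \<in> set q"
  shows "fst e \<le> fst z \<and> fst e + snd e < fst z + snd z"
proof -
  obtain i where i: "i < length q" "z = q ! i" using z by (auto simp: in_set_conv_nth)
  then show ?thesis using up_right_path_nth[OF q, of "Suc i"] by auto
qed

lemma LPP_superadditive:
  fixes w :: "int \<times> int \<Rightarrow> real"
  assumes SA: "\<And>z. z \<in> SA \<Longrightarrow> fst z < fst e"
    and B: "LPP w SA {e} \<noteq> -\<infinity>" and C: "LPP w {e} SE \<noteq> -\<infinity>"
  shows "LPP w SA {e} + LPP w {e} SE \<le> LPP w SA SE"
proof -
  define P where "P = {p. up_right_path p \<and> hd p \<in> SA \<and> last p \<in> {e}}"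
  define Q where "Q = {q. up_right_path q \<and> hd q \<in> {e} \<and> last q \<in> SE}"
  have concat: "ereal (\<Sum>z \<in> set p - SA. w z) + ereal (\<Sum>z \<in> set q - {e}. w z) \<le> LPP w SA SE"
    if p: "p \<in> P" and q: "q \<in> Q" for p q
  proof -
    obtain q' where q': "q = e # q'"
      using q by (cases q) (auto simp: Q_def up_right_path_def)
    have pq: "up_right_path (p @ q')"
      using up_right_path_append p q q' by (auto simp: P_def Q_def)
    have ends: "hd (p @ q') \<in> SA" "last (p @ q') \<in> SE"
      using p q q' by (auto simp: P_def Q_def up_right_path_def last_append split: if_splits)
    have later: "fst e \<le> fst z \<and> fst e + snd e < fst z + snd z" if "z \<in> set q'" for z
      using up_right_path_Cons_tail[of e q' z] that q q' by (simp add: Q_def)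
    have "fst z + snd z \<le> fst e + snd e" if "z \<in> set p" for z
      using up_right_path_antidiagonal_le_last[of p z] that p by (simp add: P_def)
    then have disj: "(set p - SA) \<inter> set q' = {}" and "set q' \<inter> SA = {}" and "e \<notin> set q'"
      using later SA by force+
    then have "set (p @ q') - SA = (set p - SA) \<union> set q'" and "set q - {e} = set q'"
      using q' by auto
    then have "(\<Sum>z \<in> set (p @ q') - SA. w z) = (\<Sum>z \<in> set p - SA. w z) + (\<Sum>z \<in> set q - {e}. w z)"
      using disj by (simp add: sum.union_disjoint)
    moreover have "ereal (\<Sum>z \<in> set (p @ q') - SA. w z) \<le> LPP w SA SE"
      unfolding LPP_def by (rule SUP_upper) (use pq ends in auto)
    ultimately show ?thesis by simp
  qed
  have LPP_P: "LPP w SA {e} = (SUP p\<in>P. ereal (\<Sum>z \<in> set p - SA. w z))"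
    and LPP_Q: "LPP w {e} SE = (SUP q\<in>Q. ereal (\<Sum>z \<in> set q - {e}. w z))"
    by (simp_all add: LPP_def P_def Q_def)
  have "P \<noteq> {}" "Q \<noteq> {}"
    using B C unfolding LPP_P LPP_Q by (auto simp: bot_ereal_def)
  have "LPP w SA {e} + LPP w {e} SE = (SUP p\<in>P. ereal (\<Sum>z \<in> set p - SA. w z) + LPP w {e} SE)"
    unfolding LPP_P by (rule SUP_ereal_add_left[symmetric]) (use \<open>P \<noteq> {}\<close> C in auto)
  also have "\<dots> = (SUP p\<in>P. SUP q\<in>Q. ereal (\<Sum>z \<in> set p - SA. w z) + ereal (\<Sum>z \<in> set q - {e}. w z))"
    unfolding LPP_Q by (intro SUP_cong refl SUP_ereal_add_right[symmetric]) (use \<open>Q \<noteq> {}\<close> in auto)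
  also have "\<dots> \<le> LPP w SA SE"
    by (intro SUP_least concat)
  finally show ?thesis .
qed

lemma LPP_borel_measurable:
  assumes "\<And>q. \<omega> q \<in> borel_measurable M"
  shows "(\<lambda>\<xi>. LPP (\<lambda>q. \<omega> q \<xi>) SA SE) \<in> borel_measurable M"
  unfolding LPP_def
  by (rule borel_measurable_SUP) (auto intro!: borel_measurable_ereal borel_measurable_sum assms)

lemma Lplus_fst_neg:
  assumes x_decr: "\<And>k. x (k + 1) < x k" and x1: "x 1 < -1" and z: "z \<in> Lplus x"
  shows "fst z < 0"
proof -
  obtain k where k: "z = (k + x k, k)" "k > 0"
    using z by (auto simp: Lplus_def)
  have decay: "x k \<le> x 1 - (k - 1)" if "k \<ge> 1" for k
    using that
  proof (induction k rule: int_ge_induct)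
    case (step i)
    then show ?case using x_decr[of i] by simp
  qed simp
  show ?thesis
    using decay[of k] k x1 by simp
qed

lemma eventually_fst_ipt_nonneg:
  fixes \<eta>0 u \<kappa> \<nu> :: real
  assumes \<eta>0: "\<eta>0 > 0" and \<nu>: "\<nu> < 1"
  shows "eventually (\<lambda>t. 0 \<le> fst (ipt ((\<eta>0 + u * t powr (-2/3)) * t - \<kappa> * t powr \<nu>) (t - t powr \<nu>))) at_top"
proof -
  define g where "g t = \<eta>0 + u * t powr (-2/3) - \<kappa> * t powr (\<nu> - 1)" for t :: real
  have "((\<lambda>t::real. t powr (-2/3)) \<longlongrightarrow> 0) at_top" "((\<lambda>t::real. t powr (\<nu> - 1)) \<longlongrightarrow> 0) at_top"
    using \<nu> by (intro tendsto_neg_powr filterlim_ident; simp)+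
  then have "(g \<longlongrightarrow> \<eta>0 + u * 0 - \<kappa> * 0) at_top"
    unfolding g_def by (intro tendsto_intros)
  then have "eventually (\<lambda>t. g t > 0) at_top"
    using \<eta>0 by (intro order_tendstoD(1)) auto
  then show ?thesis
    using eventually_gt_at_top[of 0]
  proof eventually_elim
    case (elim t)
    have "(\<eta>0 + u * t powr (-2/3)) * t - \<kappa> * t powr \<nu> = t * g t"
      using elim(2) by (simp add: g_def algebra_simps powr_diff)
    then show ?case
      using elim by (simp add: ipt_def)
  qed
qed

section \<open>Limit laws and convergence in probability\<close>

lemma cont_distr_fun_mono: "cont_distr_fun G \<Longrightarrow> mono G"
  by (simp add: cont_distr_fun_def)

lemma cont_distr_fun_isCont: "cont_distr_fun G \<Longrightarrow> isCont G a"
  by (simp add: cont_distr_fun_def continuous_on_eq_continuous_at)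

lemma cont_distr_fun_tails:
  assumes G: "cont_distr_fun G" and d: "d > 0"
  obtains a b where "G a < d" "1 - d < G b"
proof -
  have "eventually (\<lambda>x. G x < d) at_bot" "eventually (\<lambda>x. 1 - d < G x) at_top"
    using G d by (auto simp: cont_distr_fun_def intro: order_tendstoD)
  then show ?thesis
    using that by (auto simp: eventually_at_bot_linorder eventually_at_top_linorder)
qed

lemma mono_exists_isCont_between:
  fixes G :: "real \<Rightarrow> real"
  assumes "mono G" "a < b"
  obtains c where "a < c" "c < b" "isCont G c"
  using open_minus_countable[OF mono_ctble_discont[OF assms(1)], of "{a<..<b}"] assms(2) that
  by auto

lemma exists_grid_point_between:
  fixes e a u z :: real and K :: nat
  assumes e: "e > 0" and "a < u" "u + e < z" "z \<le> a + K * e"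
  obtains j where "j \<in> {1..K}" "u \<le> a + j * e" "a + j * e < z"
proof -
  define j where "j = nat \<lceil>(u - a) / e\<rceil>"
  have "(u - a) / e \<le> j" "j < (u - a) / e + 1"
    using \<open>a < u\<close> e ceiling_correct[of "(u - a) / e"] by (auto simp: j_def)
  then have "u \<le> a + j * e" "a + j * e < u + e"
    using e by (auto simp: field_simps)
  moreover have "0 < real j"
    using \<open>(u - a) / e \<le> j\<close> \<open>a < u\<close> e by (smt (verit) divide_pos_pos)
  then have "j \<ge> 1" by simp
  moreover have "j * e < K * e"
    using calculation assms by linarith
  ultimately show ?thesis
    using that[of j] assms by auto
qed

context prob_space
begin

definition vanishes_in_prob :: "('b \<Rightarrow> 'a \<Rightarrow> real) \<Rightarrow> 'b filter \<Rightarrow> bool" where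
  "vanishes_in_prob W F \<longleftrightarrow> (\<forall>e>0. ((\<lambda>t. prob {\<xi> \<in> space M. e < \<bar>W t \<xi>\<bar>}) \<longlongrightarrow> 0) F)"

lemma prob_le_add_of_subset_Un:
  assumes "A \<subseteq> B \<union> C" "B \<in> events" "C \<in> events"
  shows "prob A \<le> prob B + prob C"
  using finite_measure_mono[OF assms(1)] measure_Un_le[OF assms(2,3)] assms(2,3) by auto

lemma prob_tendsto_zeroI:
  assumes "\<And>\<delta>. \<delta> > 0 \<Longrightarrow> eventually (\<lambda>t. prob (S t) < \<delta>) F"
  shows "((\<lambda>t. prob (S t)) \<longlongrightarrow> 0) F"
proof (rule order_tendstoI)
  show "eventually (\<lambda>t. y < prob (S t)) F" if "y < 0" for y
    using that by (intro always_eventually) (auto intro: less_le_trans[OF _ measure_nonneg])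
qed (fact assms)

lemma prob_Un_tendsto_zero:
  assumes "\<And>t. S t \<in> events" "\<And>t. T t \<in> events"
    and "((\<lambda>t. prob (S t)) \<longlongrightarrow> 0) F" "((\<lambda>t. prob (T t)) \<longlongrightarrow> 0) F"
  shows "((\<lambda>t. prob (S t \<union> T t)) \<longlongrightarrow> 0) F"
proof (rule tendsto_sandwich[of "\<lambda>_. 0" _ _ "\<lambda>t. prob (S t) + prob (T t)"])
  show "((\<lambda>t. prob (S t) + prob (T t)) \<longlongrightarrow> 0) F"
    using tendsto_add[OF assms(3,4)] by simp
qed (auto intro: always_eventually measure_Un_le assms(1,2))

lemma prob_tendsto_cong_negligible:
  assumes S: "\<And>t. S t \<in> events" and T: "\<And>t. T t \<in> events" and N: "\<And>t. N t \<in> events"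
    and N0: "((\<lambda>t. prob (N t)) \<longlongrightarrow> 0) F"
    and ST: "eventually (\<lambda>t. S t - N t = T t - N t) F"
    and lim: "((\<lambda>t. prob (S t)) \<longlongrightarrow> L) F"
  shows "((\<lambda>t. prob (T t)) \<longlongrightarrow> L) F"
proof (rule tendsto_sandwich[of "\<lambda>t. prob (S t) - prob (N t)" _ _ "\<lambda>t. prob (S t) + prob (N t)"])
  show "eventually (\<lambda>t. prob (S t) - prob (N t) \<le> prob (T t)) F"
    using ST
  proof eventually_elim
    case (elim t)
    then have "S t \<subseteq> T t \<union> N t" by blast
    then have "prob (S t) \<le> prob (T t) + prob (N t)"
      by (rule prob_le_add_of_subset_Un) (use T N in auto)
    then show ?case by simp
  qed
  show "eventually (\<lambda>t. prob (T t) \<le> prob (S t) + prob (N t)) F"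
    using ST
  proof eventually_elim
    case (elim t)
    then have "T t \<subseteq> S t \<union> N t" by blast
    then show ?case
      by (rule prob_le_add_of_subset_Un) (use S N in auto)
  qed
qed (use tendsto_diff[OF lim N0] tendsto_add[OF lim N0] in simp_all)

lemma prob_le_ereal_tendsto_iff:
  fixes f :: "'b \<Rightarrow> 'a \<Rightarrow> ereal" and g :: "'b \<Rightarrow> 'a \<Rightarrow> real"
  assumes mf: "\<And>t. f t \<in> borel_measurable M" and mg: "\<And>t. g t \<in> borel_measurable M"
    and N: "\<And>t. N t \<in> events" and N0: "((\<lambda>t. prob (N t)) \<longlongrightarrow> 0) F"
    and fg: "eventually (\<lambda>t. \<forall>\<xi>\<in>space M - N t. f t \<xi> = ereal (g t \<xi>)) F"
  shows "((\<lambda>t. prob {\<xi> \<in> space M. f t \<xi> \<le> ereal s}) \<longlongrightarrow> L) F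
     \<longleftrightarrow> ((\<lambda>t. prob {\<xi> \<in> space M. g t \<xi> \<le> s}) \<longlongrightarrow> L) F"
proof -
  let ?S = "\<lambda>t. {\<xi> \<in> space M. f t \<xi> \<le> ereal s}" and ?T = "\<lambda>t. {\<xi> \<in> space M. g t \<xi> \<le> s}"
  have events: "\<And>t. ?S t \<in> events" "\<And>t. ?T t \<in> events"
    using mf mg by measurable
  have "eventually (\<lambda>t. ?S t - N t = ?T t - N t) F"
    using fg by eventually_elim auto
  moreover from this have "eventually (\<lambda>t. ?T t - N t = ?S t - N t) F"
    by (rule eventually_mono) simp
  ultimately show ?thesis
    using prob_tendsto_cong_negligible[of ?S ?T N F, OF events N N0]
      prob_tendsto_cong_negligible[of ?T ?S N F, OF events(2,1) N N0] by blast
qed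

lemma cont_distr_tight:
  fixes f :: "'b \<Rightarrow> 'a \<Rightarrow> ereal"
  assumes mf: "\<And>t. f t \<in> borel_measurable M" and G: "cont_distr_fun G"
    and lim: "\<And>s. ((\<lambda>t. prob {\<xi> \<in> space M. f t \<xi> \<le> ereal s}) \<longlongrightarrow> G s) F"
    and \<delta>: "\<delta> > 0"
  obtains K where "K > 0"
    "eventually (\<lambda>t. prob {\<xi> \<in> space M. f t \<xi> \<notin> {ereal (-K)<..ereal K}} < \<delta>) F"
proof -
  obtain a b where ab: "G a < \<delta>/2" "1 - \<delta>/2 < G b"
    using cont_distr_fun_tails[OF G] \<delta> by (metis half_gt_zero)
  define K where "K = \<bar>a\<bar> + \<bar>b\<bar> + 1"
  have "eventually (\<lambda>t. prob {\<xi> \<in> space M. f t \<xi> \<le> ereal a} < \<delta>/2) F"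
    using ab(1) by (rule order_tendstoD(2)[OF lim])
  moreover have "eventually (\<lambda>t. 1 - \<delta>/2 < prob {\<xi> \<in> space M. f t \<xi> \<le> ereal b}) F"
    using ab(2) by (rule order_tendstoD(1)[OF lim])
  ultimately have "eventually (\<lambda>t. prob {\<xi> \<in> space M. f t \<xi> \<notin> {ereal (-K)<..ereal K}} < \<delta>) F"
  proof eventually_elim
    case (elim t)
    let ?A = "{\<xi> \<in> space M. f t \<xi> \<le> ereal a}" and ?B = "{\<xi> \<in> space M. f t \<xi> \<le> ereal b}"
    have AB: "?A \<in> events" "?B \<in> events"
      using mf[of t] by measurable
    have "-K \<le> a" "b \<le> K"
      by (simp_all add: K_def abs_if)
    then have "f t \<xi> \<le> ereal a \<or> \<not> f t \<xi> \<le> ereal b" if "f t \<xi> \<notin> {ereal (-K)<..ereal K}" for \<xi>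
      using that by (cases "f t \<xi>") auto
    then have "{\<xi> \<in> space M. f t \<xi> \<notin> {ereal (-K)<..ereal K}} \<subseteq> ?A \<union> (space M - ?B)"
      by blast
    then have "prob {\<xi> \<in> space M. f t \<xi> \<notin> {ereal (-K)<..ereal K}} \<le> prob ?A + (1 - prob ?B)"
      using prob_le_add_of_subset_Un[of _ ?A "space M - ?B"] AB prob_compl by auto
    then show ?case using elim by linarith
  qed
  moreover have "K > 0" by (simp add: K_def add_nonneg_pos)
  ultimately show ?thesis using that by blast
qed

lemma prob_infinite_tendsto_zero:
  fixes f :: "'b \<Rightarrow> 'a \<Rightarrow> ereal"
  assumes mf: "\<And>t. f t \<in> borel_measurable M" and G: "cont_distr_fun G"
    and lim: "\<And>s. ((\<lambda>t. prob {\<xi> \<in> space M. f t \<xi> \<le> ereal s}) \<longlongrightarrow> G s) F"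
  shows "((\<lambda>t. prob {\<xi> \<in> space M. \<bar>f t \<xi>\<bar> = \<infinity>}) \<longlongrightarrow> 0) F"
proof (rule prob_tendsto_zeroI)
  fix \<delta> :: real assume "\<delta> > 0"
  then obtain K where K: "eventually (\<lambda>t. prob {\<xi> \<in> space M. f t \<xi> \<notin> {ereal (-K)<..ereal K}} < \<delta>) F"
    using cont_distr_tight[OF mf G lim] by blast
  then show "eventually (\<lambda>t. prob {\<xi> \<in> space M. \<bar>f t \<xi>\<bar> = \<infinity>} < \<delta>) F"
  proof eventually_elim
    case (elim t)
    have "{\<xi> \<in> space M. \<bar>f t \<xi>\<bar> = \<infinity>} \<subseteq> {\<xi> \<in> space M. f t \<xi> \<notin> {ereal (-K)<..ereal K}}"
      by auto
    moreover have "{\<xi> \<in> space M. f t \<xi> \<notin> {ereal (-K)<..ereal K}} \<in> events"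
      using mf[of t] by measurable
    ultimately show ?case
      using elim finite_measure_mono by (meson le_less_trans)
  qed
qed

lemma vanishes_in_prob_scaled:
  fixes Y :: "'b \<Rightarrow> 'a \<Rightarrow> real"
  assumes mY: "\<And>t. Y t \<in> borel_measurable M" and G: "cont_distr_fun G"
    and lim: "\<And>s. ((\<lambda>t. prob {\<xi> \<in> space M. Y t \<xi> \<le> s}) \<longlongrightarrow> G s) F"
    and r: "(r \<longlongrightarrow> 0) F"
  shows "vanishes_in_prob (\<lambda>t \<xi>. r t * Y t \<xi>) F"
  unfolding vanishes_in_prob_def
proof (intro allI impI prob_tendsto_zeroI)
  fix e \<delta> :: real assume e: "e > 0" and "\<delta> > 0"
  have mY': "\<And>t. (\<lambda>\<xi>. ereal (Y t \<xi>)) \<in> borel_measurable M"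
    using mY by measurable
  have lim': "\<And>s. ((\<lambda>t. prob {\<xi> \<in> space M. ereal (Y t \<xi>) \<le> ereal s}) \<longlongrightarrow> G s) F"
    using lim by simp
  obtain K where K: "K > 0"
    "eventually (\<lambda>t. prob {\<xi> \<in> space M. ereal (Y t \<xi>) \<notin> {ereal (-K)<..ereal K}} < \<delta>) F"
    using cont_distr_tight[OF mY' G lim' \<open>\<delta> > 0\<close>] by blast
  have "eventually (\<lambda>t. \<bar>r t\<bar> < e / K) F"
    using order_tendstoD(2)[OF tendsto_rabs_zero[OF r]] e K(1) by simp
  with K(2) show "eventually (\<lambda>t. prob {\<xi> \<in> space M. e < \<bar>r t * Y t \<xi>\<bar>} < \<delta>) F"
  proof eventually_elim
    case (elim t)
    have "\<bar>r t * Y t \<xi>\<bar> \<le> e" if "-K < Y t \<xi>" "Y t \<xi> \<le> K" for \<xi>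
    proof -
      have "\<bar>r t * Y t \<xi>\<bar> \<le> \<bar>r t\<bar> * K"
        unfolding abs_mult using that by (intro mult_left_mono) auto
      also have "\<dots> \<le> e"
        using elim(2) K(1) by (simp add: less_divide_eq)
      finally show ?thesis .
    qed
    then have "{\<xi> \<in> space M. e < \<bar>r t * Y t \<xi>\<bar>}
        \<subseteq> {\<xi> \<in> space M. ereal (Y t \<xi>) \<notin> {ereal (-K)<..ereal K}}"
      by force
    moreover have "{\<xi> \<in> space M. ereal (Y t \<xi>) \<notin> {ereal (-K)<..ereal K}} \<in> events"
      using mY[of t] by measurable
    ultimately show ?case
      using elim finite_measure_mono by (meson le_less_trans)
  qed
qed

lemma slutsky_vanishing_add:
  fixes V W :: "'b \<Rightarrow> 'a \<Rightarrow> real" and G :: "real \<Rightarrow> real"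
  assumes mV: "\<And>t. V t \<in> borel_measurable M" and mW: "\<And>t. W t \<in> borel_measurable M"
    and G: "mono G"
    and lim: "\<And>s. isCont G s \<Longrightarrow> ((\<lambda>t. prob {\<xi> \<in> space M. V t \<xi> \<le> s}) \<longlongrightarrow> G s) F"
    and W: "vanishes_in_prob W F" and s: "isCont G s"
  shows "((\<lambda>t. prob {\<xi> \<in> space M. V t \<xi> + W t \<xi> \<le> s}) \<longlongrightarrow> G s) F"
proof -
  have events: "{\<xi> \<in> space M. V t \<xi> \<le> a} \<in> events" "{\<xi> \<in> space M. V t \<xi> + W t \<xi> \<le> a} \<in> events"
    "{\<xi> \<in> space M. e < \<bar>W t \<xi>\<bar>} \<in> events"
    for t a e using mV[of t] mW[of t] by measurable
  have W_small: "eventually (\<lambda>t. prob {\<xi> \<in> space M. e < \<bar>W t \<xi>\<bar>} < d) F" if "e > 0" "d > 0" for e d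
    using W that unfolding vanishes_in_prob_def by (auto intro: order_tendstoD(2))
  have near: "\<exists>\<eta>>0. \<forall>x. \<bar>x - s\<bar> < \<eta> \<longrightarrow> \<bar>G x - G s\<bar> < d" if "d > 0" for d
    using s that unfolding continuous_at_eps_delta dist_real_def by blast
  show ?thesis
  proof (rule order_tendstoI)
    fix y assume "G s < y"
    then obtain \<eta> where \<eta>: "\<eta> > 0" "\<And>x. \<bar>x - s\<bar> < \<eta> \<Longrightarrow> \<bar>G x - G s\<bar> < (y - G s)/2"
      using near[of "(y - G s)/2"] by auto
    obtain s' where s': "s < s'" "s' < s + \<eta>" "isCont G s'"
      using mono_exists_isCont_between[OF G, of s "s + \<eta>"] \<eta>(1) by auto
    have "\<bar>G s' - G s\<bar> < (y - G s)/2"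
      using s' by (intro \<eta>(2)) auto
    then have "G s' < G s + (y - G s)/2"
      unfolding abs_less_iff by linarith
    then have "eventually (\<lambda>t. prob {\<xi> \<in> space M. V t \<xi> \<le> s'} < G s + (y - G s)/2) F"
      by (rule order_tendstoD(2)[OF lim[OF s'(3)]])
    moreover have "eventually (\<lambda>t. prob {\<xi> \<in> space M. s' - s < \<bar>W t \<xi>\<bar>} < (y - G s)/2) F"
      using s'(1) \<open>G s < y\<close> by (intro W_small) auto
    ultimately show "eventually (\<lambda>t. prob {\<xi> \<in> space M. V t \<xi> + W t \<xi> \<le> s} < y) F"
    proof eventually_elim
      case (elim t)
      have "{\<xi> \<in> space M. V t \<xi> + W t \<xi> \<le> s}
          \<subseteq> {\<xi> \<in> space M. V t \<xi> \<le> s'} \<union> {\<xi> \<in> space M. s' - s < \<bar>W t \<xi>\<bar>}"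
        by auto
      then have "prob {\<xi> \<in> space M. V t \<xi> + W t \<xi> \<le> s}
          \<le> prob {\<xi> \<in> space M. V t \<xi> \<le> s'} + prob {\<xi> \<in> space M. s' - s < \<bar>W t \<xi>\<bar>}"
        by (rule prob_le_add_of_subset_Un[OF _ events(1,3)])
      then show ?case
        using elim by argo
    qed
  next
    fix y assume "y < G s"
    then obtain \<eta> where \<eta>: "\<eta> > 0" "\<And>x. \<bar>x - s\<bar> < \<eta> \<Longrightarrow> \<bar>G x - G s\<bar> < (G s - y)/2"
      using near[of "(G s - y)/2"] by auto
    obtain s' where s': "s - \<eta> < s'" "s' < s" "isCont G s'"
      using mono_exists_isCont_between[OF G, of "s - \<eta>" s] \<eta>(1) by auto
    have "\<bar>G s' - G s\<bar> < (G s - y)/2"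
      using s' by (intro \<eta>(2)) auto
    then have "G s - (G s - y)/2 < G s'"
      unfolding abs_less_iff by linarith
    then have "eventually (\<lambda>t. G s - (G s - y)/2 < prob {\<xi> \<in> space M. V t \<xi> \<le> s'}) F"
      by (rule order_tendstoD(1)[OF lim[OF s'(3)]])
    moreover have "eventually (\<lambda>t. prob {\<xi> \<in> space M. s - s' < \<bar>W t \<xi>\<bar>} < (G s - y)/2) F"
      using s'(2) \<open>y < G s\<close> by (intro W_small) auto
    ultimately show "eventually (\<lambda>t. y < prob {\<xi> \<in> space M. V t \<xi> + W t \<xi> \<le> s}) F"
    proof eventually_elim
      case (elim t)
      have "{\<xi> \<in> space M. V t \<xi> \<le> s'}
          \<subseteq> {\<xi> \<in> space M. V t \<xi> + W t \<xi> \<le> s} \<union> {\<xi> \<in> space M. s - s' < \<bar>W t \<xi>\<bar>}"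
        by auto
      then have "prob {\<xi> \<in> space M. V t \<xi> \<le> s'}
          \<le> prob {\<xi> \<in> space M. V t \<xi> + W t \<xi> \<le> s} + prob {\<xi> \<in> space M. s - s' < \<bar>W t \<xi>\<bar>}"
        by (rule prob_le_add_of_subset_Un[OF _ events(2,3)])
      then show ?case
        using elim by argo
    qed
  qed
qed

lemma prob_between_tendsto_zero:
  fixes U Z :: "'b \<Rightarrow> 'a \<Rightarrow> real"
  assumes mU: "\<And>t. U t \<in> borel_measurable M" and mZ: "\<And>t. Z t \<in> borel_measurable M"
    and N: "\<And>t. N t \<in> events" and N0: "((\<lambda>t. prob (N t)) \<longlongrightarrow> 0) F"
    and le: "eventually (\<lambda>t. \<forall>\<xi>\<in>space M - N t. U t \<xi> \<le> Z t \<xi>) F"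
    and lU: "((\<lambda>t. prob {\<xi> \<in> space M. U t \<xi> \<le> a}) \<longlongrightarrow> g) F"
    and lZ: "((\<lambda>t. prob {\<xi> \<in> space M. Z t \<xi> \<le> a}) \<longlongrightarrow> g) F"
  shows "((\<lambda>t. prob {\<xi> \<in> space M. U t \<xi> \<le> a \<and> a < Z t \<xi>}) \<longlongrightarrow> 0) F"
proof (rule tendsto_sandwich[of "\<lambda>_. 0" _ _
    "\<lambda>t. prob {\<xi> \<in> space M. U t \<xi> \<le> a} - prob {\<xi> \<in> space M. Z t \<xi> \<le> a} + prob (N t)"])
  show "eventually (\<lambda>t. prob {\<xi> \<in> space M. U t \<xi> \<le> a \<and> a < Z t \<xi>}
      \<le> prob {\<xi> \<in> space M. U t \<xi> \<le> a} - prob {\<xi> \<in> space M. Z t \<xi> \<le> a} + prob (N t)) F"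
    using le
  proof eventually_elim
    case (elim t)
    let ?between = "{\<xi> \<in> space M. U t \<xi> \<le> a \<and> a < Z t \<xi>}" and ?Z = "{\<xi> \<in> space M. Z t \<xi> \<le> a}"
    have events: "?between \<in> events" "?Z \<in> events" "{\<xi> \<in> space M. U t \<xi> \<le> a} \<in> events"
      using mU[of t] mZ[of t] by measurable
    have "prob ?between + prob ?Z = prob (?between \<union> ?Z)"
      using events by (intro finite_measure_Union[symmetric]) auto
    also have "\<dots> \<le> prob {\<xi> \<in> space M. U t \<xi> \<le> a} + prob (N t)"
      using elim by (intro prob_le_add_of_subset_Un events N) force
    finally show ?case by simp
  qed
  show "((\<lambda>t. prob {\<xi> \<in> space M. U t \<xi> \<le> a} - prob {\<xi> \<in> space M. Z t \<xi> \<le> a} + prob (N t)) \<longlongrightarrow> 0) F"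
    using tendsto_add[OF tendsto_diff[OF lU lZ] N0] by simp
qed auto

lemma vanishes_in_prob_diff_of_le:
  fixes U Z :: "'b \<Rightarrow> 'a \<Rightarrow> real"
  assumes mU: "\<And>t. U t \<in> borel_measurable M" and mZ: "\<And>t. Z t \<in> borel_measurable M"
    and N: "\<And>t. N t \<in> events" and N0: "((\<lambda>t. prob (N t)) \<longlongrightarrow> 0) F"
    and le: "eventually (\<lambda>t. \<forall>\<xi>\<in>space M - N t. U t \<xi> \<le> Z t \<xi>) F"
    and G: "cont_distr_fun G"
    and lU: "\<And>a. ((\<lambda>t. prob {\<xi> \<in> space M. U t \<xi> \<le> a}) \<longlongrightarrow> G a) F"
    and lZ: "\<And>a. ((\<lambda>t. prob {\<xi> \<in> space M. Z t \<xi> \<le> a}) \<longlongrightarrow> G a) F"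
  shows "vanishes_in_prob (\<lambda>t \<xi>. Z t \<xi> - U t \<xi>) F"
  unfolding vanishes_in_prob_def
proof (intro allI impI prob_tendsto_zeroI)
  fix e \<delta> :: real assume e: "e > 0" and "\<delta> > 0"
  then obtain a b where ab: "G a < \<delta>/2" "1 - \<delta>/2 < G b"
    using cont_distr_fun_tails[OF G] by (metis half_gt_zero)
  (* If Z - U > e, a point of the grid a + j e separates U from Z; each such separation has
     vanishing probability because U \<le> Z off N and both variables have the same limit law. *)
  define K where "K = nat \<lceil>(b - a) / e\<rceil>"
  define grid where "grid j = a + real j * e" for j
  have "(b - a) / e \<le> K"
    unfolding K_def by linarith
  then have "G b \<le> G (grid K)"
    using e by (intro cont_distr_fun_mono[OF G, THEN monoD]) (simp add: grid_def field_simps)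
  define R where "R t = prob (N t) + prob {\<xi> \<in> space M. U t \<xi> \<le> a}
      + (1 - prob {\<xi> \<in> space M. Z t \<xi> \<le> grid K})
      + (\<Sum>j\<in>{1..K}. prob {\<xi> \<in> space M. U t \<xi> \<le> grid j \<and> grid j < Z t \<xi>})" for t
  have "(R \<longlongrightarrow> 0 + G a + (1 - G (grid K)) + (\<Sum>j\<in>{1..K}. 0)) F"
    unfolding R_def
    by (intro tendsto_intros N0 lU lZ prob_between_tendsto_zero[OF mU mZ N N0 le lU lZ])
  moreover have "G a + (1 - G (grid K)) < \<delta>"
    using ab \<open>G b \<le> G (grid K)\<close> by linarith
  ultimately have "eventually (\<lambda>t. R t < \<delta>) F"
    by (intro order_tendstoD(2)) auto
  with le show "eventually (\<lambda>t. prob {\<xi> \<in> space M. e < \<bar>Z t \<xi> - U t \<xi>\<bar>} < \<delta>) F"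
  proof eventually_elim
    case (elim t)
    let ?low = "{\<xi> \<in> space M. U t \<xi> \<le> a}" and ?high = "space M - {\<xi> \<in> space M. Z t \<xi> \<le> grid K}"
    let ?between = "\<lambda>j. {\<xi> \<in> space M. U t \<xi> \<le> grid j \<and> grid j < Z t \<xi>}"
    have events: "?low \<in> events" "{\<xi> \<in> space M. Z t \<xi> \<le> grid K} \<in> events" "?between j \<in> events" for j
      using mU[of t] mZ[of t] by measurable
    have "{\<xi> \<in> space M. e < \<bar>Z t \<xi> - U t \<xi>\<bar>} \<subseteq> N t \<union> ?low \<union> ?high \<union> (\<Union>j\<in>{1..K}. ?between j)"
    proof
      fix \<xi> assume \<xi>: "\<xi> \<in> {\<xi> \<in> space M. e < \<bar>Z t \<xi> - U t \<xi>\<bar>}"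
      show "\<xi> \<in> N t \<union> ?low \<union> ?high \<union> (\<Union>j\<in>{1..K}. ?between j)"
      proof (cases "\<xi> \<in> N t \<union> ?low \<union> ?high")
        case False
        then have "a < U t \<xi>" "U t \<xi> + e < Z t \<xi>" "Z t \<xi> \<le> a + K * e"
          using \<xi> elim(1) by (auto simp: grid_def)
        then obtain j where "j \<in> {1..K}" "U t \<xi> \<le> grid j" "grid j < Z t \<xi>"
          unfolding grid_def by (rule exists_grid_point_between[OF e])
        then have "\<xi> \<in> ?between j" using \<xi> by simp
        with \<open>j \<in> {1..K}\<close> show ?thesis by blast
      qed simp
    qed
    then have "prob {\<xi> \<in> space M. e < \<bar>Z t \<xi> - U t \<xi>\<bar>}
        \<le> prob (N t \<union> ?low \<union> ?high) + prob (\<Union>j\<in>{1..K}. ?between j)"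
      using events N by (intro prob_le_add_of_subset_Un) auto
    also have "\<dots> \<le> prob (N t) + prob ?low + prob ?high + (\<Sum>j\<in>{1..K}. prob (?between j))"
      using events N measure_Un_le[of "N t" M ?low] measure_Un_le[of "N t \<union> ?low" M ?high]
        finite_measure_subadditive_finite[of "{1..K}" ?between]
      by fastforce
    also have "\<dots> = R t"
      using prob_compl[OF events(2)] by (simp add: R_def)
    finally show ?case
      using elim(2) by argo
  qed
qed

lemma conv_diff_replace_minorant:
  fixes X Y1 Y2 Z :: "'b \<Rightarrow> 'a \<Rightarrow> real" and r :: "'b \<Rightarrow> real" and D :: "real measure"
  assumes mX: "\<And>t. X t \<in> borel_measurable M"
    and mY1: "\<And>t. Y1 t \<in> borel_measurable M" and mY2: "\<And>t. Y2 t \<in> borel_measurable M"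
    and mZ: "\<And>t. Z t \<in> borel_measurable M"
    and N: "\<And>t. N t \<in> events" and N0: "((\<lambda>t. prob (N t)) \<longlongrightarrow> 0) F"
    and r: "(r \<longlongrightarrow> 0) F"
    and minorant: "eventually (\<lambda>t. \<forall>\<xi>\<in>space M - N t. Y1 t \<xi> + r t * Y2 t \<xi> \<le> Z t \<xi>) F"
    and G1: "cont_distr_fun G1" and G0: "cont_distr_fun G0"
    and lY1: "\<And>s. ((\<lambda>t. prob {\<xi> \<in> space M. Y1 t \<xi> \<le> s}) \<longlongrightarrow> G1 s) F"
    and lY2: "\<And>s. ((\<lambda>t. prob {\<xi> \<in> space M. Y2 t \<xi> \<le> s}) \<longlongrightarrow> G0 s) F"
    and lZ: "\<And>s. ((\<lambda>t. prob {\<xi> \<in> space M. Z t \<xi> \<le> s}) \<longlongrightarrow> G1 s) F"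
    and D: "real_distribution D"
    and lim: "\<And>s. isCont (cdf D) s \<Longrightarrow>
       ((\<lambda>t. prob {\<xi> \<in> space M. X t \<xi> - (Y1 t \<xi> + r t * Y2 t \<xi>) \<le> s}) \<longlongrightarrow> cdf D s) F"
    and s: "isCont (cdf D) s"
  shows "((\<lambda>t. prob {\<xi> \<in> space M. X t \<xi> - Z t \<xi> \<le> s}) \<longlongrightarrow> cdf D s) F"
proof -
  define U where "U t \<xi> = Y1 t \<xi> + r t * Y2 t \<xi>" for t \<xi>
  have mU: "\<And>t. U t \<in> borel_measurable M"
    unfolding U_def using mY1 mY2 by measurable
  have lU: "((\<lambda>t. prob {\<xi> \<in> space M. U t \<xi> \<le> a}) \<longlongrightarrow> G1 a) F" for a
    unfolding U_def
    by (rule slutsky_vanishing_add[OF mY1 _ cont_distr_fun_mono[OF G1] lY1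
          vanishes_in_prob_scaled[OF mY2 G0 lY2 r] cont_distr_fun_isCont[OF G1]])
      (use mY2 in measurable)
  have "vanishes_in_prob (\<lambda>t \<xi>. Z t \<xi> - U t \<xi>) F"
    using minorant by (intro vanishes_in_prob_diff_of_le[OF mU mZ N N0 _ G1 lU lZ]) (simp add: U_def)
  then have gap: "vanishes_in_prob (\<lambda>t \<xi>. U t \<xi> - Z t \<xi>) F"
    by (simp add: vanishes_in_prob_def abs_minus_commute)
  interpret D: real_distribution D by (rule D)
  have lim_U: "((\<lambda>t. prob {\<xi> \<in> space M. X t \<xi> - U t \<xi> \<le> s'}) \<longlongrightarrow> cdf D s') F"
    if "isCont (cdf D) s'" for s'
    using lim[OF that] by (simp add: U_def)
  have "(\<lambda>\<xi>. X t \<xi> - U t \<xi>) \<in> borel_measurable M" "(\<lambda>\<xi>. U t \<xi> - Z t \<xi>) \<in> borel_measurable M" for t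
    using mX[of t] mU[of t] mZ[of t] by measurable
  then have "((\<lambda>t. prob {\<xi> \<in> space M. (X t \<xi> - U t \<xi>) + (U t \<xi> - Z t \<xi>) \<le> s}) \<longlongrightarrow> cdf D s) F"
    using D.cdf_nondecreasing by (intro slutsky_vanishing_add[OF _ _ _ lim_U gap s]) (auto simp: mono_def)
  then show ?thesis by simp
qed

end

section \<open>Reduction to real-valued variables\<close>

lemma tendsto_powr_div_powr_zero:
  fixes a b :: real
  assumes "a < b"
  shows "((\<lambda>t. t powr a / t powr b) \<longlongrightarrow> 0) at_top"
proof (rule Lim_transform_eventually)
  show "((\<lambda>t. t powr (a - b)) \<longlongrightarrow> 0) at_top"
    using assms by (intro tendsto_neg_powr filterlim_ident) auto
  show "eventually (\<lambda>t. t powr (a - b) = t powr a / t powr b) at_top"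
    using eventually_gt_at_top[of 0] by eventually_elim (simp add: powr_diff)
qed

lemma abs_ereal_normalized_eq_infinity:
  assumes "c > 0"
  shows "\<bar>(a - ereal m) / ereal c\<bar> = \<infinity> \<longleftrightarrow> \<bar>a\<bar> = \<infinity>"
    and "\<bar>(a - ereal m + ereal m') / ereal c\<bar> = \<infinity> \<longleftrightarrow> \<bar>a\<bar> = \<infinity>"
  using assms by (cases a; simp)+

context prob_space
begin

lemma conv_distr_of_superadditive_finite:
  fixes A B C Lp :: "real \<Rightarrow> 'a \<Rightarrow> ereal" and \<mu> \<mu>0 \<nu> :: real and D :: "real measure"
  assumes mA: "\<And>t. A t \<in> borel_measurable M" and mB: "\<And>t. B t \<in> borel_measurable M"
    and mC: "\<And>t. C t \<in> borel_measurable M" and mL: "\<And>t. Lp t \<in> borel_measurable M"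
    and N: "\<And>t. N t \<in> events" and N0: "((\<lambda>t. prob (N t)) \<longlongrightarrow> 0) at_top"
    and finite: "\<And>t \<xi>. \<xi> \<in> space M - N t \<Longrightarrow>
        \<bar>A t \<xi>\<bar> \<noteq> \<infinity> \<and> \<bar>B t \<xi>\<bar> \<noteq> \<infinity> \<and> \<bar>C t \<xi>\<bar> \<noteq> \<infinity> \<and> \<bar>Lp t \<xi>\<bar> \<noteq> \<infinity>"
    and G0: "cont_distr_fun G0" and G1: "cont_distr_fun G1"
    and lL: "\<And>s. ((\<lambda>t. prob {\<xi> \<in> space M.
        (Lp t \<xi> - ereal (\<mu> * t)) / ereal (t powr (1/3)) \<le> ereal s}) \<longlongrightarrow> G1 s) at_top"
    and lC: "\<And>s. ((\<lambda>t. prob {\<xi> \<in> space M.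
        (C t \<xi> - ereal (\<mu>0 * t powr \<nu>)) / ereal (t powr (\<nu>/3)) \<le> ereal s}) \<longlongrightarrow> G0 s) at_top"
    and lB: "\<And>s. ((\<lambda>t. prob {\<xi> \<in> space M.
        (B t \<xi> - ereal (\<mu> * t) + ereal (\<mu>0 * t powr \<nu>)) / ereal (t powr (1/3)) \<le> ereal s}) \<longlongrightarrow> G1 s) at_top"
    and \<nu>: "\<nu> < 1"
    and superadd: "eventually (\<lambda>t. \<forall>\<xi>\<in>space M.
        B t \<xi> \<noteq> -\<infinity> \<longrightarrow> C t \<xi> \<noteq> -\<infinity> \<longrightarrow> B t \<xi> + C t \<xi> \<le> Lp t \<xi>) at_top"
    and D: "real_distribution D"
    and hyp: "conv_distr M (\<lambda>t \<xi>. (A t \<xi> - ereal (\<mu> * t)) / ereal (t powr (1/3))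
        - (B t \<xi> + C t \<xi> - ereal (\<mu> * t)) / ereal (t powr (1/3))) D"
  shows "conv_distr M (\<lambda>t \<xi>. (A t \<xi> - ereal (\<mu> * t)) / ereal (t powr (1/3))
        - (Lp t \<xi> - ereal (\<mu> * t)) / ereal (t powr (1/3))) D"
proof -
  define X where "X t \<xi> = (real_of_ereal (A t \<xi>) - \<mu> * t) / t powr (1/3)" for t \<xi>
  define Y1 where "Y1 t \<xi> = (real_of_ereal (B t \<xi>) - \<mu> * t + \<mu>0 * t powr \<nu>) / t powr (1/3)" for t \<xi>
  define Y2 where "Y2 t \<xi> = (real_of_ereal (C t \<xi>) - \<mu>0 * t powr \<nu>) / t powr (\<nu>/3)" for t \<xi>
  define Z where "Z t \<xi> = (real_of_ereal (Lp t \<xi>) - \<mu> * t) / t powr (1/3)" for t \<xi>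
  define r where "r t = t powr (\<nu>/3) / t powr (1/3)" for t :: real
  have mX: "X t \<in> borel_measurable M" for t
    unfolding X_def using mA[of t] by measurable
  have mY1: "Y1 t \<in> borel_measurable M" for t
    unfolding Y1_def using mB[of t] by measurable
  have mY2: "Y2 t \<in> borel_measurable M" for t
    unfolding Y2_def using mC[of t] by measurable
  have mZ: "Z t \<in> borel_measurable M" for t
    unfolding Z_def using mL[of t] by measurable
  have real_values: "\<exists>a b c l. A t \<xi> = ereal a \<and> B t \<xi> = ereal b \<and> C t \<xi> = ereal c \<and> Lp t \<xi> = ereal l"
    if "\<xi> \<in> space M - N t" for t \<xi>
    using finite[OF that] by (metis ereal_real')
  have normalized:
    "(A t \<xi> - ereal (\<mu> * t)) / ereal (t powr (1/3)) = ereal (X t \<xi>)"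
    "(B t \<xi> - ereal (\<mu> * t) + ereal (\<mu>0 * t powr \<nu>)) / ereal (t powr (1/3)) = ereal (Y1 t \<xi>)"
    "(C t \<xi> - ereal (\<mu>0 * t powr \<nu>)) / ereal (t powr (\<nu>/3)) = ereal (Y2 t \<xi>)"
    "(Lp t \<xi> - ereal (\<mu> * t)) / ereal (t powr (1/3)) = ereal (Z t \<xi>)"
    "(B t \<xi> + C t \<xi> - ereal (\<mu> * t)) / ereal (t powr (1/3)) = ereal (Y1 t \<xi> + r t * Y2 t \<xi>)"
    if "t > 0" "\<xi> \<in> space M - N t" for t \<xi>
    using real_values[OF that(2)] that(1)
    by (auto simp: X_def Y1_def Y2_def Z_def r_def field_simps)
  have transfer: "((\<lambda>t. prob {\<xi> \<in> space M. f t \<xi> \<le> ereal s}) \<longlongrightarrow> L) at_top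
      \<longleftrightarrow> ((\<lambda>t. prob {\<xi> \<in> space M. g t \<xi> \<le> s}) \<longlongrightarrow> L) at_top"
    if "\<And>t. f t \<in> borel_measurable M" "\<And>t. g t \<in> borel_measurable M"
      "\<And>t \<xi>. t > 0 \<Longrightarrow> \<xi> \<in> space M - N t \<Longrightarrow> f t \<xi> = ereal (g t \<xi>)"
    for f g s L
  proof (rule prob_le_ereal_tendsto_iff[OF that(1,2) N N0])
    show "eventually (\<lambda>t. \<forall>\<xi>\<in>space M - N t. f t \<xi> = ereal (g t \<xi>)) at_top"
      using eventually_gt_at_top[of 0] by eventually_elim (use that(3) in blast)
  qed
  have minorant: "eventually (\<lambda>t. \<forall>\<xi>\<in>space M - N t. Y1 t \<xi> + r t * Y2 t \<xi> \<le> Z t \<xi>) at_top"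
    using eventually_gt_at_top[of 0] superadd
  proof eventually_elim
    case (elim t)
    show ?case
    proof
      fix \<xi> assume \<xi>: "\<xi> \<in> space M - N t"
      have "B t \<xi> + C t \<xi> \<le> Lp t \<xi>"
        using elim(2) \<xi> real_values[OF \<xi>] by auto
      then have "(B t \<xi> + C t \<xi> - ereal (\<mu> * t)) / ereal (t powr (1/3))
          \<le> (Lp t \<xi> - ereal (\<mu> * t)) / ereal (t powr (1/3))"
        using elim(1) by (intro ereal_divide_right_mono ereal_minus_mono) auto
      then show "Y1 t \<xi> + r t * Y2 t \<xi> \<le> Z t \<xi>"
        using normalized[OF elim(1) \<xi>] by simp
    qed
  qed
  have lY1: "((\<lambda>t. prob {\<xi> \<in> space M. Y1 t \<xi> \<le> s}) \<longlongrightarrow> G1 s) at_top" for s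
    by (rule transfer[THEN iffD1, OF _ _ _ lB]) (use mB in measurable, rule mY1, rule normalized(2))
  have lY2: "((\<lambda>t. prob {\<xi> \<in> space M. Y2 t \<xi> \<le> s}) \<longlongrightarrow> G0 s) at_top" for s
    by (rule transfer[THEN iffD1, OF _ _ _ lC]) (use mC in measurable, rule mY2, rule normalized(3))
  have lZ: "((\<lambda>t. prob {\<xi> \<in> space M. Z t \<xi> \<le> s}) \<longlongrightarrow> G1 s) at_top" for s
    by (rule transfer[THEN iffD1, OF _ _ _ lL]) (use mL in measurable, rule mZ, rule normalized(4))
  have lim_minorant: "((\<lambda>t. prob {\<xi> \<in> space M. X t \<xi> - (Y1 t \<xi> + r t * Y2 t \<xi>) \<le> s})
      \<longlongrightarrow> cdf D s) at_top" if "isCont (cdf D) s" for s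
  proof (rule transfer[THEN iffD1])
    show "((\<lambda>t. prob {\<xi> \<in> space M. (A t \<xi> - ereal (\<mu> * t)) / ereal (t powr (1/3))
        - (B t \<xi> + C t \<xi> - ereal (\<mu> * t)) / ereal (t powr (1/3)) \<le> ereal s}) \<longlongrightarrow> cdf D s) at_top"
      using hyp that by (simp add: conv_distr_def)
  qed (use mA mB mC in measurable, use mX mY1 mY2 in measurable, simp add: normalized(1,5))
  have r: "(r \<longlongrightarrow> 0) at_top"
    unfolding r_def using \<nu> by (intro tendsto_powr_div_powr_zero) simp
  have lim_Z: "((\<lambda>t. prob {\<xi> \<in> space M. X t \<xi> - Z t \<xi> \<le> s}) \<longlongrightarrow> cdf D s) at_top"
    if "isCont (cdf D) s" for s
    by (rule conv_diff_replace_minorant[OF mX mY1 mY2 mZ N N0 r minorant G1 G0 lY1 lY2 lZ D lim_minorant that])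
  show ?thesis
    unfolding conv_distr_def
  proof (intro allI impI)
    fix s assume s: "isCont (cdf D) s"
    show "((\<lambda>t. prob {\<xi> \<in> space M. (A t \<xi> - ereal (\<mu> * t)) / ereal (t powr (1/3))
        - (Lp t \<xi> - ereal (\<mu> * t)) / ereal (t powr (1/3)) \<le> ereal s}) \<longlongrightarrow> cdf D s) at_top"
      by (rule transfer[THEN iffD2, OF _ _ _ lim_Z[OF s]])
        (use mA mL in measurable, use mX mZ in measurable, simp add: normalized(1,4))
  qed
qed

lemma conv_distr_of_superadditive:
  fixes A B C Lp :: "real \<Rightarrow> 'a \<Rightarrow> ereal" and \<mu> \<mu>0 \<nu> :: real and D :: "real measure"
  assumes mA: "\<And>t. A t \<in> borel_measurable M" and mB: "\<And>t. B t \<in> borel_measurable M"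
    and mC: "\<And>t. C t \<in> borel_measurable M" and mL: "\<And>t. Lp t \<in> borel_measurable M"
    and G0: "cont_distr_fun G0" and G1: "cont_distr_fun G1" and G2: "cont_distr_fun G2"
    and lA: "\<And>s. ((\<lambda>t. prob {\<xi> \<in> space M.
        (A t \<xi> - ereal (\<mu> * t)) / ereal (t powr (1/3)) \<le> ereal s}) \<longlongrightarrow> G2 s) at_top"
    and lL: "\<And>s. ((\<lambda>t. prob {\<xi> \<in> space M.
        (Lp t \<xi> - ereal (\<mu> * t)) / ereal (t powr (1/3)) \<le> ereal s}) \<longlongrightarrow> G1 s) at_top"
    and lC: "\<And>s. ((\<lambda>t. prob {\<xi> \<in> space M.
        (C t \<xi> - ereal (\<mu>0 * t powr \<nu>)) / ereal (t powr (\<nu>/3)) \<le> ereal s}) \<longlongrightarrow> G0 s) at_top"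
    and lB: "\<And>s. ((\<lambda>t. prob {\<xi> \<in> space M.
        (B t \<xi> - ereal (\<mu> * t) + ereal (\<mu>0 * t powr \<nu>)) / ereal (t powr (1/3)) \<le> ereal s}) \<longlongrightarrow> G1 s) at_top"
    and \<nu>: "\<nu> < 1"
    and superadd: "eventually (\<lambda>t. \<forall>\<xi>\<in>space M.
        B t \<xi> \<noteq> -\<infinity> \<longrightarrow> C t \<xi> \<noteq> -\<infinity> \<longrightarrow> B t \<xi> + C t \<xi> \<le> Lp t \<xi>) at_top"
    and D: "real_distribution D"
    and hyp: "conv_distr M (\<lambda>t \<xi>. (A t \<xi> - ereal (\<mu> * t)) / ereal (t powr (1/3))
        - (B t \<xi> + C t \<xi> - ereal (\<mu> * t)) / ereal (t powr (1/3))) D"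
  shows "conv_distr M (\<lambda>t \<xi>. (A t \<xi> - ereal (\<mu> * t)) / ereal (t powr (1/3))
        - (Lp t \<xi> - ereal (\<mu> * t)) / ereal (t powr (1/3))) D"
proof (rule conv_distr_of_superadditive_finite[OF mA mB mC mL _ _ _ G0 G1 lL lC lB \<nu> superadd D hyp])
  let ?inf = "\<lambda>f t. {\<xi> \<in> space M. \<bar>f t \<xi>\<bar> = (\<infinity>::ereal)}"
  have events: "?inf A t \<in> events" "?inf B t \<in> events" "?inf C t \<in> events" "?inf Lp t \<in> events" for t
    using mA[of t] mB[of t] mC[of t] mL[of t] by measurable
  then show "?inf A t \<union> ?inf B t \<union> ?inf C t \<union> ?inf Lp t \<in> events" for t
    by simp
  have inf_vanishes: "((\<lambda>t. prob (?inf f t)) \<longlongrightarrow> 0) at_top"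
    if "\<And>t. g t \<in> borel_measurable M" "cont_distr_fun G"
      "\<And>s. ((\<lambda>t. prob {\<xi> \<in> space M. g t \<xi> \<le> ereal s}) \<longlongrightarrow> G s) at_top"
      "\<And>t \<xi>. t > 0 \<Longrightarrow> \<bar>g t \<xi>\<bar> = \<infinity> \<longleftrightarrow> \<bar>f t \<xi>\<bar> = \<infinity>"
    for f g :: "real \<Rightarrow> 'a \<Rightarrow> ereal" and G
    using prob_infinite_tendsto_zero[OF that(1-3)] eventually_gt_at_top[of 0]
    by (rule Lim_transform_eventually[OF _ eventually_mono]) (simp add: that(4))
  have "((\<lambda>t. prob (?inf A t)) \<longlongrightarrow> 0) at_top"
    by (rule inf_vanishes[OF _ G2 lA])
      (use mA in measurable, simp add: abs_ereal_normalized_eq_infinity)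
  moreover have "((\<lambda>t. prob (?inf B t)) \<longlongrightarrow> 0) at_top"
    by (rule inf_vanishes[OF _ G1 lB])
      (use mB in measurable, simp add: abs_ereal_normalized_eq_infinity)
  ultimately have "((\<lambda>t. prob (?inf A t \<union> ?inf B t)) \<longlongrightarrow> 0) at_top"
    by (rule prob_Un_tendsto_zero[OF events(1,2)])
  moreover have "((\<lambda>t. prob (?inf C t)) \<longlongrightarrow> 0) at_top"
    by (rule inf_vanishes[OF _ G0 lC])
      (use mC in measurable, simp add: abs_ereal_normalized_eq_infinity)
  ultimately have "((\<lambda>t. prob (?inf A t \<union> ?inf B t \<union> ?inf C t)) \<longlongrightarrow> 0) at_top"
    by (rule prob_Un_tendsto_zero[OF sets.Un[OF events(1,2)] events(3)])
  moreover have "((\<lambda>t. prob (?inf Lp t)) \<longlongrightarrow> 0) at_top"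
    by (rule inf_vanishes[OF _ G1 lL])
      (use mL in measurable, simp add: abs_ereal_normalized_eq_infinity)
  ultimately show "((\<lambda>t. prob (?inf A t \<union> ?inf B t \<union> ?inf C t \<union> ?inf Lp t)) \<longlongrightarrow> 0) at_top"
    by (rule prob_Un_tendsto_zero[OF sets.Un[OF sets.Un[OF events(1,2)] events(3)] events(4)])
  show "\<bar>A t \<xi>\<bar> \<noteq> \<infinity> \<and> \<bar>B t \<xi>\<bar> \<noteq> \<infinity> \<and> \<bar>C t \<xi>\<bar> \<noteq> \<infinity> \<and> \<bar>Lp t \<xi>\<bar> \<noteq> \<infinity>"
    if "\<xi> \<in> space M - (?inf A t \<union> ?inf B t \<union> ?inf C t \<union> ?inf Lp t)" for t \<xi>
    using that by auto
qed

end

theorem proposition2p6: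
  fixes M :: "'a measure"
    and \<omega> :: "int \<times> int \<Rightarrow> 'a \<Rightarrow> real"
    and v :: "int \<Rightarrow> real"
    and x :: "int \<Rightarrow> int"
    and \<eta>0 u \<mu> \<kappa> \<mu>0 \<nu> :: real
    and G0 G1 G2 :: "real \<Rightarrow> real"
    and D :: "real measure"
  assumes M: "prob_space M"
    and v_pos: "\<And>j. v j > 0"
    and \<omega>_indep: "prob_space.indep_vars M (\<lambda>_. borel) \<omega> UNIV"
    and \<omega>_exp: "\<And>i j. distributed M lborel (\<omega> (i, j)) (\<lambda>r. ennreal (exponential_density (v j) r))"
    and x_decr: "\<And>k. x (k + 1) < x k"
    and x0: "x 0 = 1"
    and x1: "x 1 < -1"
    and \<eta>0: "\<eta>0 > 0"
    \<comment> \<open>Assumption A1\<close>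
    and G1: "cont_distr_fun G1" and G2: "cont_distr_fun G2"
    and A1_plus: "\<And>s. ((\<lambda>t. measure M {\<xi> \<in> space M.
         (LPP (\<lambda>q. \<omega> q \<xi>) (Lplus x) {ipt ((\<eta>0 + u * t powr (-2/3)) * t) t} - ereal (\<mu> * t))
           / ereal (t powr (1/3)) \<le> ereal s}) \<longlongrightarrow> G1 s) at_top"
    and A1_minus: "\<And>s. ((\<lambda>t. measure M {\<xi> \<in> space M.
         (LPP (\<lambda>q. \<omega> q \<xi>) (Lminus x) {ipt ((\<eta>0 + u * t powr (-2/3)) * t) t} - ereal (\<mu> * t))
           / ereal (t powr (1/3)) \<le> ereal s}) \<longlongrightarrow> G2 s) at_top"
    \<comment> \<open>Assumption A2, with E+ = ipt (\<eta> t - \<kappa> t^\<nu>) (t - t^\<nu>)\<close>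
    and \<nu>: "1/3 < \<nu>" "\<nu> < 1"
    and G0: "cont_distr_fun G0"
    and A2_E: "\<And>s. ((\<lambda>t. measure M {\<xi> \<in> space M.
         (LPP (\<lambda>q. \<omega> q \<xi>) {ipt ((\<eta>0 + u * t powr (-2/3)) * t - \<kappa> * t powr \<nu>) (t - t powr \<nu>)}
                {ipt ((\<eta>0 + u * t powr (-2/3)) * t) t} - ereal (\<mu>0 * t powr \<nu>))
           / ereal (t powr (\<nu>/3)) \<le> ereal s}) \<longlongrightarrow> G0 s) at_top"
    and A2_plus: "\<And>s. ((\<lambda>t. measure M {\<xi> \<in> space M.
         (LPP (\<lambda>q. \<omega> q \<xi>) (Lplus x)
                {ipt ((\<eta>0 + u * t powr (-2/3)) * t - \<kappa> * t powr \<nu>) (t - t powr \<nu>)}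
            - ereal (\<mu> * t) + ereal (\<mu>0 * t powr \<nu>))
           / ereal (t powr (1/3)) \<le> ereal s}) \<longlongrightarrow> G1 s) at_top"
    \<comment> \<open>D a probability distribution and the hypothesis of convergence\<close>
    and D: "real_distribution D"
    and hyp: "conv_distr M (\<lambda>t \<xi>.
         (LPP (\<lambda>q. \<omega> q \<xi>) (Lminus x) {ipt ((\<eta>0 + u * t powr (-2/3)) * t) t} - ereal (\<mu> * t))
           / ereal (t powr (1/3))
       - (LPP (\<lambda>q. \<omega> q \<xi>) (Lplus x)
                {ipt ((\<eta>0 + u * t powr (-2/3)) * t - \<kappa> * t powr \<nu>) (t - t powr \<nu>)}
          + LPP (\<lambda>q. \<omega> q \<xi>) {ipt ((\<eta>0 + u * t powr (-2/3)) * t - \<kappa> * t powr \<nu>) (t - t powr \<nu>)}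
                {ipt ((\<eta>0 + u * t powr (-2/3)) * t) t}
          - ereal (\<mu> * t))
           / ereal (t powr (1/3))) D"
  shows "conv_distr M (\<lambda>t \<xi>.
         (LPP (\<lambda>q. \<omega> q \<xi>) (Lminus x) {ipt ((\<eta>0 + u * t powr (-2/3)) * t) t} - ereal (\<mu> * t))
           / ereal (t powr (1/3))
       - (LPP (\<lambda>q. \<omega> q \<xi>) (Lplus x) {ipt ((\<eta>0 + u * t powr (-2/3)) * t) t} - ereal (\<mu> * t))
           / ereal (t powr (1/3))) D"
proof -
  interpret prob_space M by (rule M)
  have m\<omega>: "\<And>q. \<omega> q \<in> borel_measurable M"
    using \<omega>_indep by (auto simp: indep_vars_def)
  let ?E = "\<lambda>t. ipt ((\<eta>0 + u * t powr (-2/3)) * t - \<kappa> * t powr \<nu>) (t - t powr \<nu>)"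
    and ?P = "\<lambda>t. ipt ((\<eta>0 + u * t powr (-2/3)) * t) t"
  have "eventually (\<lambda>t. \<forall>\<xi>\<in>space M.
      LPP (\<lambda>q. \<omega> q \<xi>) (Lplus x) {?E t} \<noteq> -\<infinity> \<longrightarrow> LPP (\<lambda>q. \<omega> q \<xi>) {?E t} {?P t} \<noteq> -\<infinity> \<longrightarrow>
      LPP (\<lambda>q. \<omega> q \<xi>) (Lplus x) {?E t} + LPP (\<lambda>q. \<omega> q \<xi>) {?E t} {?P t}
        \<le> LPP (\<lambda>q. \<omega> q \<xi>) (Lplus x) {?P t}) at_top"
    using eventually_fst_ipt_nonneg[OF \<eta>0 \<nu>(2), of u \<kappa>]
  proof eventually_elim
    case (elim t)
    have "fst z < fst (?E t)" if "z \<in> Lplus x" for z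
      using Lplus_fst_neg[OF x_decr x1 that] elim by linarith
    then show ?case
      using LPP_superadditive by blast
  qed
  then show ?thesis
    by (rule conv_distr_of_superadditive[OF LPP_borel_measurable[OF m\<omega>] LPP_borel_measurable[OF m\<omega>]
        LPP_borel_measurable[OF m\<omega>] LPP_borel_measurable[OF m\<omega>] G0 G1 G2 A1_minus A1_plus A2_E A2_plus
        \<nu>(2) _ D hyp])
qed

end
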